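(* Let $(R,\mathfrak{m})$ be an almost setup. For every $t\in\mathbb{N}$ let $$C_t\colon\ 0\to M_{t,1}\xrightarrow{\varphi_t}M_{t,2}\xrightarrow{\psi_t}M_{t,3}$$ be a complex of $R$-modules, and for $t\ge1$ and $i=1,2,3$ let $\omega_t\colon M_{t,i}\to M_{t-1,i}$ be $R$-linear maps such that all resulting squares commute. If every $C_t$ is almost exact, then the inverse limit complex $\varprojlim_{t\in\mathbb{N}}C_t$ is almost exact as well.
   Context: An almost setup is a pair $(R,\mathfrak{m})$ of a commutative ring $R$ and an ideal $\mathfrak{m}$ with $\mathfrak{m}^2=\mathfrak{m}$ and $\mathfrak{m}\otimes_R\mathfrak{m}$ flat over $R$. An $R$-module $N$ is almost zero if $\mathfrak{m}N=0$. A complex of $R$-modules is almost exact if its cohomology modules are almost zero (equivalently, it becomes exact in the quotient category of almost $R$-modules). *)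

theory Defs
  imports Complex_Main "HOL-Library.Function_Algebras"
begin

(* The ring R is the type 'a :: comm_ring_1 (R = UNIV).  R-modules are
   R-submodules M \<subseteq> 'b of an ambient R-module ('b, scale) *)

definition is_ideal :: "'a::comm_ring_1 set \<Rightarrow> bool" where
  "is_ideal I \<longleftrightarrow> module.subspace ((*) :: 'a \<Rightarrow> 'a \<Rightarrow> 'a) I"

definition ideal_prod :: "'a::comm_ring_1 set \<Rightarrow> 'a set \<Rightarrow> 'a set" where
  "ideal_prod I J = module.span ((*) :: 'a \<Rightarrow> 'a \<Rightarrow> 'a) {x * y | x y. x \<in> I \<and> y \<in> J}"

definition fscale :: "'a::comm_ring_1 \<Rightarrow> ('a \<times> 'a \<Rightarrow> 'a) \<Rightarrow> ('a \<times> 'a \<Rightarrow> 'a)" where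
  "fscale r f = (\<lambda>p. r * f p)"

definition delta :: "'a \<times> 'a \<Rightarrow> ('a \<times> 'a \<Rightarrow> 'a::comm_ring_1)" where
  "delta p = (\<lambda>q. if q = p then 1 else 0)"

definition free_pairs :: "'a::comm_ring_1 set \<Rightarrow> ('a \<times> 'a \<Rightarrow> 'a) set" where
  "free_pairs I = {f. finite {p. f p \<noteq> 0} \<and> {p. f p \<noteq> 0} \<subseteq> I \<times> I}"

definition bilin_rels :: "'a::comm_ring_1 set \<Rightarrow> ('a \<times> 'a \<Rightarrow> 'a) set" where
  "bilin_rels I =
     {delta (x + x', y) - delta (x, y) - delta (x', y) | x x' y. x \<in> I \<and> x' \<in> I \<and> y \<in> I}
   \<union> {delta (x, y + y') - delta (x, y) - delta (x, y') | x y y'. x \<in> I \<and> y \<in> I \<and> y' \<in> I}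
   \<union> {delta (r * x, y) - fscale r (delta (x, y)) | r x y. x \<in> I \<and> y \<in> I}
   \<union> {delta (x, r * y) - fscale r (delta (x, y)) | r x y. x \<in> I \<and> y \<in> I}"

(* the submodule of relations; I \<otimes>_R I = free_pairs I / tensor_rels I *)
definition tensor_rels :: "'a::comm_ring_1 set \<Rightarrow> ('a \<times> 'a \<Rightarrow> 'a) set" where
  "tensor_rels I = module.span fscale (bilin_rels I)"

(* flatness of I \<otimes>_R I, via the equational criterion of flatness:
   every relation \<Sum> a_i x_i = 0 in the module is trivial, i.e. there are
   y_j and b_ij with x_i = \<Sum>_j b_ij y_j and \<Sum>_i a_i b_ij = 0 for all j.
   Elements of the quotient are represented by elements of free_pairs I,
   equality in the quotient is congruence modulo tensor_rels I. *)
definition tensor_square_flat :: "'a::comm_ring_1 set \<Rightarrow> bool" where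
  "tensor_square_flat I \<longleftrightarrow>
     (\<forall>n (a :: nat \<Rightarrow> 'a) x.
        (\<forall>i<n. x i \<in> free_pairs I) \<longrightarrow>
        (\<Sum>i<n. fscale (a i) (x i)) \<in> tensor_rels I \<longrightarrow>
        (\<exists>k (b :: nat \<Rightarrow> nat \<Rightarrow> 'a) y.
            (\<forall>j<k. y j \<in> free_pairs I) \<and>
            (\<forall>i<n. x i - (\<Sum>j<k. fscale (b i j) (y j)) \<in> tensor_rels I) \<and>
            (\<forall>j<k. (\<Sum>i<n. a i * b i j) = 0)))"

definition almost_setup :: "'a::comm_ring_1 set \<Rightarrow> bool" where
  "almost_setup m \<longleftrightarrow> is_ideal m \<and> ideal_prod m m = m \<and> tensor_square_flat m"

definition lin_on ::
  "('a::comm_ring_1 \<Rightarrow> 'b::ab_group_add \<Rightarrow> 'b) \<Rightarrow> ('a \<Rightarrow> 'c::ab_group_add \<Rightarrow> 'c)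
   \<Rightarrow> 'b set \<Rightarrow> 'c set \<Rightarrow> ('b \<Rightarrow> 'c) \<Rightarrow> bool" where
  "lin_on s1 s2 A B f \<longleftrightarrow>
     (\<forall>x\<in>A. f x \<in> B) \<and> (\<forall>x\<in>A. \<forall>y\<in>A. f (x + y) = f x + f y) \<and>
     (\<forall>r. \<forall>x\<in>A. f (s1 r x) = s2 r (f x))"

definition complex3 ::
  "('a::comm_ring_1 \<Rightarrow> 'b::ab_group_add \<Rightarrow> 'b) \<Rightarrow> ('a \<Rightarrow> 'c::ab_group_add \<Rightarrow> 'c)
   \<Rightarrow> ('a \<Rightarrow> 'd::ab_group_add \<Rightarrow> 'd) \<Rightarrow> 'b set \<Rightarrow> 'c set \<Rightarrow> 'd set
   \<Rightarrow> ('b \<Rightarrow> 'c) \<Rightarrow> ('c \<Rightarrow> 'd) \<Rightarrow> bool" where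
  "complex3 s1 s2 s3 A B C f g \<longleftrightarrow>
     module s1 \<and> module s2 \<and> module s3 \<and>
     module.subspace s1 A \<and> module.subspace s2 B \<and> module.subspace s3 C \<and>
     lin_on s1 s2 A B f \<and> lin_on s2 s3 B C g \<and> (\<forall>x\<in>A. g (f x) = 0)"

(* 0 \<rightarrow> A \<rightarrow> B \<rightarrow> C is almost exact: the cohomology modules
   H^0 = ker f and H^1 = ker g / im f are killed by m *)
definition almost_exact3 ::
  "'a::comm_ring_1 set \<Rightarrow> ('a \<Rightarrow> 'b::ab_group_add \<Rightarrow> 'b) \<Rightarrow> ('a \<Rightarrow> 'c::ab_group_add \<Rightarrow> 'c)
   \<Rightarrow> 'b set \<Rightarrow> 'c set \<Rightarrow> ('b \<Rightarrow> 'c) \<Rightarrow> ('c \<Rightarrow> 'd::ab_group_add) \<Rightarrow> bool" where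
  "almost_exact3 m s1 s2 A B f g \<longleftrightarrow>
     (\<forall>x\<in>A. f x = 0 \<longrightarrow> (\<forall>r\<in>m. s1 r x = 0)) \<and>
     (\<forall>y\<in>B. g y = 0 \<longrightarrow> (\<forall>r\<in>m. \<exists>x\<in>A. f x = s2 r y))"

definition inv_lim :: "(nat \<Rightarrow> 'b set) \<Rightarrow> (nat \<Rightarrow> 'b \<Rightarrow> 'b) \<Rightarrow> (nat \<Rightarrow> 'b) set" where
  "inv_lim M \<omega> = {x. (\<forall>t. x t \<in> M t) \<and> (\<forall>t. \<omega> (Suc t) (x (Suc t)) = x t)}"

definition lim_scale :: "('a \<Rightarrow> 'b \<Rightarrow> 'b) \<Rightarrow> 'a \<Rightarrow> (nat \<Rightarrow> 'b) \<Rightarrow> (nat \<Rightarrow> 'b)" where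
  "lim_scale s r x = (\<lambda>t. s r (x t))"

definition lim_map :: "(nat \<Rightarrow> 'b \<Rightarrow> 'c) \<Rightarrow> (nat \<Rightarrow> 'b) \<Rightarrow> (nat \<Rightarrow> 'c)" where
  "lim_map f x = (\<lambda>t. f t (x t))"

end

theory Submission
  imports Defs
begin

text \<open>The kernel of the limit map is killed by \<open>m\<close> degreewise. For the cokernel, take a compatible
  cycle \<open>y\<close> and \<open>p, q \<in> m\<close>: choose preimages \<open>x\<^sub>t\<close> of \<open>p y\<^sub>t\<close> independently in each degree. They
  need not be compatible, but their defects lie in \<open>ker \<phi>\<^sub>t\<close>, which \<open>q\<close> kills, so \<open>(q x\<^sub>t)\<^sub>t\<close> is a
  compatible preimage of \<open>pq y\<close>. The scalars \<open>r\<close> for which \<open>r y\<close> lifts form an ideal, which therefore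
  contains \<open>m\<^sup>2 = m\<close>.\<close>

lemma module_times: "module ((*) :: 'a::comm_ring_1 \<Rightarrow> 'a \<Rightarrow> 'a)"
  by unfold_locales (simp_all add: algebra_simps)

lemma ideal_prod_subset:
  assumes "is_ideal J" and "\<And>p q. p \<in> I \<Longrightarrow> q \<in> I' \<Longrightarrow> p * q \<in> J"
  shows "ideal_prod I I' \<subseteq> J"
  unfolding ideal_prod_def
  by (rule module.span_minimal[OF module_times]) (use assms in \<open>auto simp: is_ideal_def\<close>)

lemma lin_on_zero:
  assumes "lin_on s1 s2 A B f" and "0 \<in> A"
  shows "f 0 = 0"
proof -
  have "f (0 + 0) = f 0 + f 0"
    using assms unfolding lin_on_def by blast
  then show ?thesis by simp
qed

lemma lin_on_diff:
  assumes "module s1" "module.subspace s1 A" "lin_on s1 s2 A B f" "a \<in> A" "b \<in> A"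
  shows "f (a - b) = f a - f b"
proof -
  have "a - b \<in> A" using module.subspace_diff assms(1,2,4,5) .
  then have "f (b + (a - b)) = f b + f (a - b)"
    using assms unfolding lin_on_def by blast
  then show ?thesis by (simp add: algebra_simps)
qed

lemma module_lim_scale:
  assumes "module s"
  shows "module (lim_scale s)"
  using assms unfolding module_def lim_scale_def
  by (simp add: fun_eq_iff)

lemma subspace_inv_lim:
  assumes s: "module s"
    and M: "\<And>t. module.subspace s (M t)"
    and \<omega>: "\<And>t. lin_on s s (M (Suc t)) (M t) (\<omega> (Suc t))"
  shows "module.subspace (lim_scale s) (inv_lim M \<omega>)"
proof (rule module.subspaceI[OF module_lim_scale[OF s]])
  have "\<omega> (Suc t) 0 = 0" for t
    using lin_on_zero[OF \<omega>] module.subspace_0[OF s M] .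
  then show "0 \<in> inv_lim M \<omega>"
    using module.subspace_0[OF s M] unfolding inv_lim_def by simp
next
  fix x y assume "x \<in> inv_lim M \<omega>" "y \<in> inv_lim M \<omega>"
  then show "x + y \<in> inv_lim M \<omega>"
    using module.subspace_add[OF s M] \<omega> unfolding inv_lim_def lin_on_def by simp
next
  fix c x assume "x \<in> inv_lim M \<omega>"
  then show "lim_scale s c x \<in> inv_lim M \<omega>"
    using module.subspace_scale[OF s M] \<omega> unfolding inv_lim_def lin_on_def lim_scale_def by simp
qed

lemma lin_on_lim_map:
  assumes f: "\<And>t. lin_on s1 s2 (M t) (N t) (f t)"
    and \<alpha>: "\<And>t. lin_on s1 s1 (M (Suc t)) (M t) (\<alpha> (Suc t))"
    and comm: "\<And>t x. x \<in> M (Suc t) \<Longrightarrow> f t (\<alpha> (Suc t) x) = \<beta> (Suc t) (f (Suc t) x)"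
  shows "lin_on (lim_scale s1) (lim_scale s2) (inv_lim M \<alpha>) (inv_lim N \<beta>) (lim_map f)"
  unfolding lin_on_def
proof (intro conjI ballI allI)
  fix x assume x: "x \<in> inv_lim M \<alpha>"
  have "\<beta> (Suc t) (f (Suc t) (x (Suc t))) = f t (x t)" for t
    using x comm[of "x (Suc t)" t] unfolding inv_lim_def by simp
  then show "lim_map f x \<in> inv_lim N \<beta>"
    using x f unfolding inv_lim_def lim_map_def lin_on_def by simp
next
  fix x y assume "x \<in> inv_lim M \<alpha>" "y \<in> inv_lim M \<alpha>"
  then show "lim_map f (x + y) = lim_map f x + lim_map f y"
    using f unfolding inv_lim_def lim_map_def lin_on_def by (simp add: fun_eq_iff)
next
  fix r x assume "x \<in> inv_lim M \<alpha>"
  then show "lim_map f (lim_scale s1 r x) = lim_scale s2 r (lim_map f x)"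
    using f unfolding inv_lim_def lim_map_def lim_scale_def lin_on_def by simp
qed

lemma is_ideal_liftable_scalars:
  assumes s1: "module s1" and s2: "module s2" and A: "module.subspace s1 A"
    and f: "lin_on s1 s2 A B f"
  shows "is_ideal {r. \<exists>x\<in>A. f x = s2 r y}"
  unfolding is_ideal_def
proof (rule module.subspaceI[OF module_times])
  show "0 \<in> {r. \<exists>x\<in>A. f x = s2 r y}"
    using module.subspace_0[OF s1 A] lin_on_zero[OF f] module.scale_zero_left[OF s2] by auto
next
  fix a b assume "a \<in> {r. \<exists>x\<in>A. f x = s2 r y}" "b \<in> {r. \<exists>x\<in>A. f x = s2 r y}"
  then obtain u v where "u \<in> A" "f u = s2 a y" "v \<in> A" "f v = s2 b y" by blast
  then have "u + v \<in> A" "f (u + v) = s2 (a + b) y"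
    using module.subspace_add[OF s1 A] f module.scale_left_distrib[OF s2]
    unfolding lin_on_def by auto
  then show "a + b \<in> {r. \<exists>x\<in>A. f x = s2 r y}" by blast
next
  fix c a assume "a \<in> {r. \<exists>x\<in>A. f x = s2 r y}"
  then obtain u where "u \<in> A" "f u = s2 a y" by blast
  then have "s1 c u \<in> A" "f (s1 c u) = s2 (c * a) y"
    using module.subspace_scale[OF s1 A] f module.scale_scale[OF s2]
    unfolding lin_on_def by auto
  then show "c * a \<in> {r. \<exists>x\<in>A. f x = s2 r y}" by blast
qed

lemma almost_exact3_scale_eq:
  assumes ae: "almost_exact3 m s1 s2 A B f g"
    and s1: "module s1" and A: "module.subspace s1 A" and f: "lin_on s1 s2 A B f"
    and "a \<in> A" "b \<in> A" "f a = f b" "q \<in> m"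
  shows "s1 q a = s1 q b"
proof -
  have "a - b \<in> A" "f (a - b) = 0"
    using module.subspace_diff[OF s1 A] lin_on_diff[OF s1 A f] assms(5-7) by auto
  then have "s1 q (a - b) = 0"
    using ae \<open>q \<in> m\<close> unfolding almost_exact3_def by blast
  then show ?thesis
    using module.scale_right_diff_distrib[OF s1] by simp
qed

locale almost_exact_tower =
  fixes m :: "'a::comm_ring_1 set"
    and s1 :: "'a \<Rightarrow> 'b::ab_group_add \<Rightarrow> 'b" and s2 :: "'a \<Rightarrow> 'c::ab_group_add \<Rightarrow> 'c"
    and M :: "nat \<Rightarrow> 'b set" and N :: "nat \<Rightarrow> 'c set"
    and f :: "nat \<Rightarrow> 'b \<Rightarrow> 'c" and g :: "nat \<Rightarrow> 'c \<Rightarrow> 'd::ab_group_add"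
    and \<alpha> :: "nat \<Rightarrow> 'b \<Rightarrow> 'b" and \<beta> :: "nat \<Rightarrow> 'c \<Rightarrow> 'c"
  assumes module1: "module s1" and module2: "module s2"
    and subspace_M: "module.subspace s1 (M t)"
    and lin_f: "lin_on s1 s2 (M t) (N t) (f t)"
    and lin_\<alpha>: "lin_on s1 s1 (M (Suc t)) (M t) (\<alpha> (Suc t))"
    and lin_\<beta>: "lin_on s2 s2 (N (Suc t)) (N t) (\<beta> (Suc t))"
    and comm: "x \<in> M (Suc t) \<Longrightarrow> f t (\<alpha> (Suc t) x) = \<beta> (Suc t) (f (Suc t) x)"
    and almost_exact: "almost_exact3 m s1 s2 (M t) (N t) (f t) (g t)"
begin

lemma inv_lim_kernel_almost_zero:
  assumes x: "x \<in> inv_lim M \<alpha>" "lim_map f x = 0" and r: "r \<in> m"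
  shows "lim_scale s1 r x = 0"
proof -
  have "x t \<in> M t" "f t (x t) = 0" for t
    using x unfolding inv_lim_def lim_map_def by (auto simp: fun_eq_iff)
  then have "s1 r (x t) = 0" for t
    using almost_exact r unfolding almost_exact3_def by blast
  then show ?thesis
    unfolding lim_scale_def by (simp add: fun_eq_iff)
qed

lemma product_scaled_cycle_lifts:
  assumes y: "y \<in> inv_lim N \<beta>" "lim_map g y = 0" and pq: "p \<in> m" "q \<in> m"
  shows "\<exists>x\<in>inv_lim M \<alpha>. lim_map f x = lim_scale s2 (p * q) y"
proof -
  have yt: "y t \<in> N t" "g t (y t) = 0" "\<beta> (Suc t) (y (Suc t)) = y t" for t
    using y unfolding inv_lim_def lim_map_def by (auto simp: fun_eq_iff)
  have "\<exists>x\<in>M t. f t x = s2 p (y t)" for t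
    using almost_exact yt pq unfolding almost_exact3_def by blast
  then obtain X where X: "\<And>t. X t \<in> M t" "\<And>t. f t (X t) = s2 p (y t)"
    by metis
  have "f t (\<alpha> (Suc t) (X (Suc t))) = \<beta> (Suc t) (s2 p (y (Suc t)))" for t
    using comm X by simp
  also have "\<dots> t = f t (X t)" for t
    using lin_\<beta> yt X unfolding lin_on_def by simp
  finally have "s1 q (\<alpha> (Suc t) (X (Suc t))) = s1 q (X t)" for t
    using almost_exact3_scale_eq[OF almost_exact module1 subspace_M lin_f] lin_\<alpha> X pq
    unfolding lin_on_def by blast
  then have "(\<lambda>t. s1 q (X t)) \<in> inv_lim M \<alpha>"
    using module.subspace_scale[OF module1 subspace_M] lin_\<alpha> X
    unfolding inv_lim_def lin_on_def by simp
  moreover have "lim_map f (\<lambda>t. s1 q (X t)) = lim_scale s2 (p * q) y"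
    using lin_f X module.scale_scale[OF module2] unfolding lin_on_def lim_map_def lim_scale_def
    by (simp add: mult.commute)
  ultimately show ?thesis by blast
qed

lemma inv_lim_cycle_scaled_lifts:
  assumes m: "ideal_prod m m = m"
    and y: "y \<in> inv_lim N \<beta>" "lim_map g y = 0" and r: "r \<in> m"
  shows "\<exists>x\<in>inv_lim M \<alpha>. lim_map f x = lim_scale s2 r y"
proof -
  have "module.subspace (lim_scale s1) (inv_lim M \<alpha>)"
    by (rule subspace_inv_lim) (rule module1, rule subspace_M, rule lin_\<alpha>)
  moreover have "lin_on (lim_scale s1) (lim_scale s2) (inv_lim M \<alpha>) (inv_lim N \<beta>) (lim_map f)"
    by (rule lin_on_lim_map) (rule lin_f, rule lin_\<alpha>, erule comm)
  ultimately have "is_ideal {r. \<exists>x\<in>inv_lim M \<alpha>. lim_map f x = lim_scale s2 r y}"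
    by (rule is_ideal_liftable_scalars[OF module_lim_scale[OF module1] module_lim_scale[OF module2]])
  then have "ideal_prod m m \<subseteq> {r. \<exists>x\<in>inv_lim M \<alpha>. lim_map f x = lim_scale s2 r y}"
    by (rule ideal_prod_subset) (use product_scaled_cycle_lifts[OF y] in blast)
  then show ?thesis
    using m r by blast
qed

end

theorem lemmaB4:
  fixes m :: "'a::comm_ring_1 set"
    and s1 :: "'a \<Rightarrow> 'b::ab_group_add \<Rightarrow> 'b"
    and s2 :: "'a \<Rightarrow> 'c::ab_group_add \<Rightarrow> 'c"
    and s3 :: "'a \<Rightarrow> 'd::ab_group_add \<Rightarrow> 'd"
    and M1 :: "nat \<Rightarrow> 'b set" and M2 :: "nat \<Rightarrow> 'c set" and M3 :: "nat \<Rightarrow> 'd set"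
    and \<phi> :: "nat \<Rightarrow> 'b \<Rightarrow> 'c" and \<psi> :: "nat \<Rightarrow> 'c \<Rightarrow> 'd"
    and \<omega>1 :: "nat \<Rightarrow> 'b \<Rightarrow> 'b" and \<omega>2 :: "nat \<Rightarrow> 'c \<Rightarrow> 'c" and \<omega>3 :: "nat \<Rightarrow> 'd \<Rightarrow> 'd"
  assumes almost: "almost_setup m"
    and cx: "\<And>t. complex3 s1 s2 s3 (M1 t) (M2 t) (M3 t) (\<phi> t) (\<psi> t)"
    and lin1: "\<And>t. lin_on s1 s1 (M1 (Suc t)) (M1 t) (\<omega>1 (Suc t))"
    and lin2: "\<And>t. lin_on s2 s2 (M2 (Suc t)) (M2 t) (\<omega>2 (Suc t))"
    and lin3: "\<And>t. lin_on s3 s3 (M3 (Suc t)) (M3 t) (\<omega>3 (Suc t))"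
    and comm1: "\<And>t x. x \<in> M1 (Suc t) \<Longrightarrow> \<phi> t (\<omega>1 (Suc t) x) = \<omega>2 (Suc t) (\<phi> (Suc t) x)"
    and comm2: "\<And>t y. y \<in> M2 (Suc t) \<Longrightarrow> \<psi> t (\<omega>2 (Suc t) y) = \<omega>3 (Suc t) (\<psi> (Suc t) y)"
    and ae: "\<And>t. almost_exact3 m s1 s2 (M1 t) (M2 t) (\<phi> t) (\<psi> t)"
  shows "almost_exact3 m (lim_scale s1) (lim_scale s2)
           (inv_lim M1 \<omega>1) (inv_lim M2 \<omega>2) (lim_map \<phi>) (lim_map \<psi>)"
proof -
  interpret almost_exact_tower m s1 s2 M1 M2 \<phi> \<psi> \<omega>1 \<omega>2
    by (rule almost_exact_tower.intro) (use cx lin1 lin2 comm1 ae in \<open>auto simp: complex3_def\<close>)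
  have "ideal_prod m m = m"
    using almost unfolding almost_setup_def by blast
  then show ?thesis
    unfolding almost_exact3_def
    using inv_lim_kernel_almost_zero inv_lim_cycle_scaled_lifts by blast
qed

end
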